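(* Let $(G,\mathcal{T},(A^\circ,B^\circ),k)$ be a Terminal Separation instance, let $\mathcal{T}'$ be the set of terminal pairs disjoint from $A^\circ\cup B^\circ$, and let $\{s,t\}\in\mathcal{T}'$. Suppose $(A_s,B_t)$ and $(A_s',B_t')$ are maximal terminal separations, each of minimum cost among terminal separations extending $(A^\circ\cup\{s\},B^\circ\cup\{t\})$, and that neither of them contains in the union of its two sides any terminal pair of $\mathcal{T}'$ other than $\{s,t\}$. Then (a) $d(A_s)=d(A_s')$ and $d(B_t)=d(B_t')$; (b) $(A_s\cap A_s',B_t\cup B_t')$ and $(A_s\cup A_s',B_t\cap B_t')$ are also terminal separations of minimum cost among separations extending $(A^\circ\cup\{s\},B^\circ\cup\{t\})$; (c) $A_s\cup B_t=A_s'\cup B_t'$.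
   Context: Graphs may have multiple edges but no loops; $d(X)$ is the number of edges with exactly one endpoint in $X$. For a family $\mathcal{T}$ of pairwise disjoint vertex pairs (terminals are their vertices), a terminal separation is a pair $(A,B)$ of disjoint vertex sets such that each pair in $\mathcal{T}$ either has one vertex in $A$ and one in $B$ or is disjoint from $A\cup B$; $(A',B')$ extends $(A,B)$ if $A\subseteq A'$, $B\subseteq B'$; cost $c(A,B)=(d(A)+d(B))/2$; a terminal separation is maximal if every other terminal separation extending it has strictly larger cost. A Terminal Separation instance $(G,\mathcal{T},(A^\circ,B^\circ),k)$ has every terminal of degree at most one and $(A^\circ,B^\circ)$ a terminal separation. *)

theory Defs
  imports Complex_Main
begin

text \<open>A multigraph without loops: vertex set V, edge set E (edges are distinct
objects, so parallel edges are allowed), ends e = the two endpoints of e.\<close>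
definition multigraph :: "'a set \<Rightarrow> 'e set \<Rightarrow> ('e \<Rightarrow> 'a set) \<Rightarrow> bool" where
  "multigraph V E ends \<longleftrightarrow> finite V \<and> finite E \<and>
     (\<forall>e\<in>E. ends e \<subseteq> V \<and> card (ends e) = 2)"

definition dcut :: "'e set \<Rightarrow> ('e \<Rightarrow> 'a set) \<Rightarrow> 'a set \<Rightarrow> nat" where
  "dcut E ends X = card {e\<in>E. card (ends e \<inter> X) = 1}"

definition degree :: "'e set \<Rightarrow> ('e \<Rightarrow> 'a set) \<Rightarrow> 'a \<Rightarrow> nat" where
  "degree E ends v = card {e\<in>E. v \<in> ends e}"

definition pair_family :: "'a set \<Rightarrow> 'a set set \<Rightarrow> bool" where
  "pair_family V T \<longleftrightarrow> (\<forall>p\<in>T. p \<subseteq> V \<and> card p = 2) \<and>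
     (\<forall>p\<in>T. \<forall>q\<in>T. p \<noteq> q \<longrightarrow> p \<inter> q = {})"

definition terminals :: "'a set set \<Rightarrow> 'a set" where
  "terminals T = \<Union>T"

definition term_sep :: "'a set \<Rightarrow> 'a set set \<Rightarrow> 'a set \<Rightarrow> 'a set \<Rightarrow> bool" where
  "term_sep V T A B \<longleftrightarrow> A \<subseteq> V \<and> B \<subseteq> V \<and> A \<inter> B = {} \<and>
     (\<forall>p\<in>T. (card (p \<inter> A) = 1 \<and> card (p \<inter> B) = 1) \<or> p \<inter> (A \<union> B) = {})"

definition extends :: "'a set \<Rightarrow> 'a set \<Rightarrow> 'a set \<Rightarrow> 'a set \<Rightarrow> bool" where
  "extends A B A' B' \<longleftrightarrow> A \<subseteq> A' \<and> B \<subseteq> B'"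

definition cost :: "'e set \<Rightarrow> ('e \<Rightarrow> 'a set) \<Rightarrow> 'a set \<Rightarrow> 'a set \<Rightarrow> real" where
  "cost E ends A B = (real (dcut E ends A) + real (dcut E ends B)) / 2"

definition maximal_sep ::
  "'a set \<Rightarrow> 'e set \<Rightarrow> ('e \<Rightarrow> 'a set) \<Rightarrow> 'a set set \<Rightarrow> 'a set \<Rightarrow> 'a set \<Rightarrow> bool" where
  "maximal_sep V E ends T A B \<longleftrightarrow> term_sep V T A B \<and>
     (\<forall>A' B'. term_sep V T A' B' \<and> extends A B A' B' \<and> (A', B') \<noteq> (A, B)
        \<longrightarrow> cost E ends A' B' > cost E ends A B)"

definition min_ext_sep ::
  "'a set \<Rightarrow> 'e set \<Rightarrow> ('e \<Rightarrow> 'a set) \<Rightarrow> 'a set set \<Rightarrow> 'a set \<Rightarrow> 'a set \<Rightarrow> 'a set \<Rightarrow> 'a set \<Rightarrow> bool" where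
  "min_ext_sep V E ends T A0 B0 A B \<longleftrightarrow> term_sep V T A B \<and> extends A0 B0 A B \<and>
     (\<forall>A' B'. term_sep V T A' B' \<and> extends A0 B0 A' B' \<longrightarrow> cost E ends A B \<le> cost E ends A' B')"

definition ts_instance ::
  "'a set \<Rightarrow> 'e set \<Rightarrow> ('e \<Rightarrow> 'a set) \<Rightarrow> 'a set set \<Rightarrow> 'a set \<Rightarrow> 'a set \<Rightarrow> nat \<Rightarrow> bool" where
  "ts_instance V E ends T A0 B0 k \<longleftrightarrow> multigraph V E ends \<and> pair_family V T \<and>
     (\<forall>v\<in>terminals T. degree E ends v \<le> 1) \<and> term_sep V T A0 B0"

end

theory Submission
  imports Defs
begin

text \<open>The cost d(A) + d(B) is bisubmodular: the meet (A \<inter> A', B \<inter> B') and the join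
(A \<union> A' - (B \<union> B'), B \<union> B' - (A \<union> A')) of two separations, and likewise the crossed pairs
(A \<inter> A', B \<union> B') and (A \<union> A', B \<inter> B'), together cost at most as much as the two separations.
Since neither optimal separation touches a terminal pair of T' other than {s, t}, every disjoint
extension of (A0 \<union> {s}, B0 \<union> {t}) inside As \<union> Bt \<union> As' \<union> Bt' is a terminal separation; so all these
combinations are feasible and therefore optimal as well. Comparing the meet with the mixed pairs
(As, Bt \<inter> Bt') and (As \<inter> As', Bt) gives (a). For (c), joining (As, Bt) with the join of both
separations yields an optimal extension of (As, Bt) that covers As' \<union> Bt', so maximality of (As, Bt)
forces As' \<union> Bt' \<subseteq> As \<union> Bt.\<close>

lemma dcut_eq_sum:
  assumes "finite E"
  shows "dcut E ends X = (\<Sum>e\<in>E. of_bool (card (ends e \<inter> X) = 1))"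
  unfolding dcut_def by (simp add: of_bool_def sum.inter_filter[OF assms, symmetric])

lemma card_doubleton_Int_eq_1_iff:
  "u \<noteq> v \<Longrightarrow> card ({u, v} \<inter> X) = 1 \<longleftrightarrow> (u \<in> X) \<noteq> (v \<in> X)"
  by (cases "u \<in> X"; cases "v \<in> X") auto

lemma multigraph_edge_ends:
  assumes "multigraph V E ends" "e \<in> E"
  obtains u v where "u \<noteq> v" "ends e = {u, v}"
  using assms unfolding multigraph_def by (metis card_2_iff)

lemma dcut_bisubmodular:
  assumes "multigraph V E ends" "A1 \<inter> B1 = {}" "A2 \<inter> B2 = {}"
  shows "dcut E ends (A1 \<inter> A2) + dcut E ends (B1 \<inter> B2)
      + dcut E ends (A1 \<union> A2 - (B1 \<union> B2)) + dcut E ends (B1 \<union> B2 - (A1 \<union> A2))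
    \<le> dcut E ends A1 + dcut E ends B1 + dcut E ends A2 + dcut E ends B2"
proof -
  let ?cut = "\<lambda>e X. of_bool (card (ends e \<inter> X) = 1) :: nat"
  let ?lhs = "\<lambda>e. ?cut e (A1 \<inter> A2) + ?cut e (B1 \<inter> B2)
      + ?cut e (A1 \<union> A2 - (B1 \<union> B2)) + ?cut e (B1 \<union> B2 - (A1 \<union> A2))"
  let ?rhs = "\<lambda>e. ?cut e A1 + ?cut e B1 + ?cut e A2 + ?cut e B2"
  have "?lhs e \<le> ?rhs e" if e: "e \<in> E" for e
  proof -
    obtain u v where "u \<noteq> v" "ends e = {u, v}"
      using multigraph_edge_ends[OF assms(1) e] .
    with assms(2,3) show ?thesis
      by (cases "u \<in> A1"; cases "u \<in> A2"; cases "u \<in> B1"; cases "u \<in> B2";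
          cases "v \<in> A1"; cases "v \<in> A2"; cases "v \<in> B1"; cases "v \<in> B2";
          simp add: card_doubleton_Int_eq_1_iff)
  qed
  then have "(\<Sum>e\<in>E. ?lhs e) \<le> (\<Sum>e\<in>E. ?rhs e)"
    by (rule sum_mono)
  moreover have "finite E"
    using assms(1) unfolding multigraph_def by simp
  ultimately show ?thesis
    by (simp only: dcut_eq_sum sum.distrib)
qed

lemma dcut_submodular:
  assumes "multigraph V E ends"
  shows "dcut E ends (X \<inter> Y) + dcut E ends (X \<union> Y) \<le> dcut E ends X + dcut E ends Y"
proof -
  have "dcut E ends {} = 0"
    by (simp add: dcut_def)
  then show ?thesis
    using dcut_bisubmodular[OF assms, of X "{}" Y "{}"] by simp
qed

lemma cost_meet_join_le:
  assumes "multigraph V E ends" "A1 \<inter> B1 = {}" "A2 \<inter> B2 = {}"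
  shows "cost E ends (A1 \<inter> A2) (B1 \<inter> B2)
      + cost E ends (A1 \<union> A2 - (B1 \<union> B2)) (B1 \<union> B2 - (A1 \<union> A2))
    \<le> cost E ends A1 B1 + cost E ends A2 B2"
  using of_nat_mono[OF dcut_bisubmodular[OF assms], where 'a = real]
  unfolding cost_def by (simp add: field_simps)

lemma cost_cross_le:
  assumes "multigraph V E ends"
  shows "cost E ends (A1 \<inter> A2) (B1 \<union> B2) + cost E ends (A1 \<union> A2) (B1 \<inter> B2)
    \<le> cost E ends A1 B1 + cost E ends A2 B2"
  using of_nat_mono[OF dcut_submodular[OF assms, of A1 A2], where 'a = real]
    of_nat_mono[OF dcut_submodular[OF assms, of B1 B2], where 'a = real]
  unfolding cost_def by (simp add: field_simps)

lemma term_sep_pair_subset_or_disjoint: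
  assumes "pair_family V T" "term_sep V T A B" "p \<in> T"
  shows "p \<subseteq> A \<union> B \<or> p \<inter> (A \<union> B) = {}"
proof (rule disjCI)
  assume "p \<inter> (A \<union> B) \<noteq> {}"
  then have "card (p \<inter> A) = 1" "card (p \<inter> B) = 1" "A \<inter> B = {}"
    using assms(2,3) unfolding term_sep_def by auto
  moreover have "card p = 2" "finite p"
    using assms(1,3) unfolding pair_family_def by (auto intro: card_ge_0_finite)
  ultimately have "card (p \<inter> (A \<union> B)) = card p"
    by (simp add: Int_Un_distrib card_Un_disjoint disjoint_iff)
  with \<open>finite p\<close> show "p \<subseteq> A \<union> B"
    using card_subset_eq[of p "p \<inter> (A \<union> B)"] by blast
qed

definition unconstrained_within :: "'a set \<Rightarrow> 'a set set \<Rightarrow> 'a set \<Rightarrow> 'a set \<Rightarrow> 'a set \<Rightarrow> bool" where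
  "unconstrained_within V T A0 B0 W \<longleftrightarrow>
     (\<forall>A B. A0 \<subseteq> A \<longrightarrow> B0 \<subseteq> B \<longrightarrow> A \<inter> B = {} \<longrightarrow> A \<union> B \<subseteq> W \<longrightarrow> term_sep V T A B)"

lemma unconstrained_within_if_pairs_avoid:
  assumes pairs: "pair_family V T" and sep0: "term_sep V T A0 B0"
    and st: "{s, t} \<in> T" "{s, t} \<inter> (A0 \<union> B0) = {}"
    and W: "W \<subseteq> V"
    and avoid: "\<And>p. p \<in> T \<Longrightarrow> p \<inter> (A0 \<union> B0) = {} \<Longrightarrow> p \<noteq> {s, t} \<Longrightarrow> p \<inter> W = {}"
  shows "unconstrained_within V T (A0 \<union> {s}) (B0 \<union> {t}) W"
  unfolding unconstrained_within_def
proof (intro allI impI)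
  fix A B
  assume A: "A0 \<union> {s} \<subseteq> A" and B: "B0 \<union> {t} \<subseteq> B" and AB: "A \<inter> B = {}" and "A \<union> B \<subseteq> W"
  have "card (p \<inter> A) = 1 \<and> card (p \<inter> B) = 1 \<or> p \<inter> (A \<union> B) = {}" if p: "p \<in> T" for p
  proof (cases "p \<inter> (A0 \<union> B0) = {}")
    case True
    show ?thesis
    proof (cases "p = {s, t}")
      case True
      then have "p \<inter> A = {s}" "p \<inter> B = {t}"
        using A B AB by auto
      then show ?thesis by simp
    next
      case False
      with \<open>A \<union> B \<subseteq> W\<close> show ?thesis
        using avoid[OF p \<open>p \<inter> (A0 \<union> B0) = {}\<close>] by blast
    qed
  next
    case False
    then have "p \<subseteq> A0 \<union> B0" "card (p \<inter> A0) = 1 \<and> card (p \<inter> B0) = 1"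
      using term_sep_pair_subset_or_disjoint[OF pairs sep0 p] sep0 p unfolding term_sep_def by auto
    moreover from \<open>p \<subseteq> A0 \<union> B0\<close> have "p \<inter> A = p \<inter> A0" "p \<inter> B = p \<inter> B0"
      using A B AB by auto
    ultimately show ?thesis by simp
  qed
  with AB \<open>A \<union> B \<subseteq> W\<close> W show "term_sep V T A B"
    unfolding term_sep_def by auto
qed

lemma min_ext_sep_cost_eq:
  assumes "min_ext_sep V E ends T A0 B0 A B" "min_ext_sep V E ends T A0 B0 A' B'"
  shows "cost E ends A B = cost E ends A' B'"
  using assms unfolding min_ext_sep_def by (meson order_antisym)

lemma maximal_sep_eq_if_cost_le:
  assumes "maximal_sep V E ends T A B" "term_sep V T A' B'" "extends A B A' B'"
    and "cost E ends A' B' \<le> cost E ends A B"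
  shows "A' = A \<and> B' = B"
  using assms unfolding maximal_sep_def by fastforce

locale two_min_ext_seps =
  fixes V :: "'a set" and E :: "'e set" and ends :: "'e \<Rightarrow> 'a set" and T :: "'a set set"
    and A0 B0 W A1 B1 A2 B2 :: "'a set"
  assumes multigraph: "multigraph V E ends"
    and unconstrained: "unconstrained_within V T A0 B0 W"
    and min1: "min_ext_sep V E ends T A0 B0 A1 B1"
    and min2: "min_ext_sep V E ends T A0 B0 A2 B2"
    and within: "A1 \<union> B1 \<union> A2 \<union> B2 \<subseteq> W"
begin

lemma swap: "two_min_ext_seps V E ends T A0 B0 W A2 B2 A1 B1"
  using multigraph unconstrained min1 min2 within by unfold_locales (auto simp: ac_simps)

lemma ext_disj1: "A0 \<subseteq> A1" "B0 \<subseteq> B1" "A1 \<inter> B1 = {}"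
  and ext_disj2: "A0 \<subseteq> A2" "B0 \<subseteq> B2" "A2 \<inter> B2 = {}"
  using min1 min2 unfolding min_ext_sep_def extends_def term_sep_def by auto

lemma cost_le_within:
  assumes "A0 \<subseteq> A" "B0 \<subseteq> B" "A \<inter> B = {}" "A \<union> B \<subseteq> W"
  shows "cost E ends A1 B1 \<le> cost E ends A B"
  using assms unconstrained min1 unfolding unconstrained_within_def min_ext_sep_def extends_def
  by simp

lemma min_ext_sep_within:
  assumes "A0 \<subseteq> A" "B0 \<subseteq> B" "A \<inter> B = {}" "A \<union> B \<subseteq> W"
    and "cost E ends A B \<le> cost E ends A1 B1"
  shows "min_ext_sep V E ends T A0 B0 A B"
  using assms unconstrained min1 unfolding unconstrained_within_def min_ext_sep_def extends_def
  by (meson order_trans)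

lemma cost_eq: "cost E ends A2 B2 = cost E ends A1 B1"
  using min_ext_sep_cost_eq[OF min2 min1] .

lemma min_ext_sep_cross:
  "min_ext_sep V E ends T A0 B0 (A1 \<inter> A2) (B1 \<union> B2)"
  "min_ext_sep V E ends T A0 B0 (A1 \<union> A2) (B1 \<inter> B2)"
proof -
  have in_box: "A0 \<subseteq> A1 \<inter> A2" "B0 \<subseteq> B1 \<union> B2" "(A1 \<inter> A2) \<inter> (B1 \<union> B2) = {}"
      "A1 \<inter> A2 \<union> (B1 \<union> B2) \<subseteq> W"
    "A0 \<subseteq> A1 \<union> A2" "B0 \<subseteq> B1 \<inter> B2" "(A1 \<union> A2) \<inter> (B1 \<inter> B2) = {}"
      "A1 \<union> A2 \<union> (B1 \<inter> B2) \<subseteq> W"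
    using ext_disj1 ext_disj2 within by blast+
  have "cost E ends A1 B1 \<le> cost E ends (A1 \<inter> A2) (B1 \<union> B2)"
    "cost E ends A1 B1 \<le> cost E ends (A1 \<union> A2) (B1 \<inter> B2)"
    using cost_le_within[OF in_box(1-4)] cost_le_within[OF in_box(5-8)] .
  with cost_cross_le[OF multigraph, of A1 A2 B1 B2] cost_eq
  have "cost E ends (A1 \<inter> A2) (B1 \<union> B2) \<le> cost E ends A1 B1"
    "cost E ends (A1 \<union> A2) (B1 \<inter> B2) \<le> cost E ends A1 B1"
    by linarith+
  then show "min_ext_sep V E ends T A0 B0 (A1 \<inter> A2) (B1 \<union> B2)"
    "min_ext_sep V E ends T A0 B0 (A1 \<union> A2) (B1 \<inter> B2)"
    using min_ext_sep_within[OF in_box(1-4)] min_ext_sep_within[OF in_box(5-8)] by auto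
qed

lemma min_ext_sep_meet_join:
  "min_ext_sep V E ends T A0 B0 (A1 \<inter> A2) (B1 \<inter> B2)"
  "min_ext_sep V E ends T A0 B0 (A1 \<union> A2 - (B1 \<union> B2)) (B1 \<union> B2 - (A1 \<union> A2))"
proof -
  have in_box: "A0 \<subseteq> A1 \<inter> A2" "B0 \<subseteq> B1 \<inter> B2" "(A1 \<inter> A2) \<inter> (B1 \<inter> B2) = {}"
      "A1 \<inter> A2 \<union> B1 \<inter> B2 \<subseteq> W"
    "A0 \<subseteq> A1 \<union> A2 - (B1 \<union> B2)" "B0 \<subseteq> B1 \<union> B2 - (A1 \<union> A2)"
      "(A1 \<union> A2 - (B1 \<union> B2)) \<inter> (B1 \<union> B2 - (A1 \<union> A2)) = {}"
      "A1 \<union> A2 - (B1 \<union> B2) \<union> (B1 \<union> B2 - (A1 \<union> A2)) \<subseteq> W"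
    using ext_disj1 ext_disj2 within by blast+
  have "cost E ends A1 B1 \<le> cost E ends (A1 \<inter> A2) (B1 \<inter> B2)"
    "cost E ends A1 B1 \<le> cost E ends (A1 \<union> A2 - (B1 \<union> B2)) (B1 \<union> B2 - (A1 \<union> A2))"
    using cost_le_within[OF in_box(1-4)] cost_le_within[OF in_box(5-8)] .
  with cost_meet_join_le[OF multigraph ext_disj1(3) ext_disj2(3)] cost_eq
  have "cost E ends (A1 \<inter> A2) (B1 \<inter> B2) \<le> cost E ends A1 B1"
    "cost E ends (A1 \<union> A2 - (B1 \<union> B2)) (B1 \<union> B2 - (A1 \<union> A2)) \<le> cost E ends A1 B1"
    by linarith+
  then show "min_ext_sep V E ends T A0 B0 (A1 \<inter> A2) (B1 \<inter> B2)"
    "min_ext_sep V E ends T A0 B0 (A1 \<union> A2 - (B1 \<union> B2)) (B1 \<union> B2 - (A1 \<union> A2))"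
    using min_ext_sep_within[OF in_box(1-4)] min_ext_sep_within[OF in_box(5-8)] by auto
qed

lemma dcut_meet_eq:
  "dcut E ends (A1 \<inter> A2) = dcut E ends A1" "dcut E ends (B1 \<inter> B2) = dcut E ends B1"
proof -
  have "cost E ends (A1 \<inter> A2) (B1 \<inter> B2) = cost E ends A1 B1"
    using min_ext_sep_cost_eq[OF min_ext_sep_meet_join(1) min1] .
  moreover have "cost E ends A1 B1 \<le> cost E ends A1 (B1 \<inter> B2)"
    "cost E ends A1 B1 \<le> cost E ends (A1 \<inter> A2) B1"
    using ext_disj1 ext_disj2 within by (intro cost_le_within; blast)+
  ultimately have "real (dcut E ends (A1 \<inter> A2)) = real (dcut E ends A1)"
    "real (dcut E ends (B1 \<inter> B2)) = real (dcut E ends B1)"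
    unfolding cost_def by (auto simp: field_simps)
  then show "dcut E ends (A1 \<inter> A2) = dcut E ends A1" "dcut E ends (B1 \<inter> B2) = dcut E ends B1"
    by simp_all
qed

lemma dcut_eq: "dcut E ends A1 = dcut E ends A2" "dcut E ends B1 = dcut E ends B2"
  using dcut_meet_eq two_min_ext_seps.dcut_meet_eq[OF swap] by (simp_all add: Int_commute)

lemma union_subset_if_maximal:
  assumes max1: "maximal_sep V E ends T A1 B1"
  shows "A2 \<union> B2 \<subseteq> A1 \<union> B1"
proof -
  define JA where "JA = A1 \<union> A2 - (B1 \<union> B2)"
  define JB where "JB = B1 \<union> B2 - (A1 \<union> A2)"
  interpret join: two_min_ext_seps V E ends T A0 B0 W A1 B1 JA JB
    using multigraph unconstrained min1 min_ext_sep_meet_join(2) within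
    unfolding JA_def JB_def by unfold_locales auto
  let ?ZA = "A1 \<union> JA - (B1 \<union> JB)" and ?ZB = "B1 \<union> JB - (A1 \<union> JA)"
  have "min_ext_sep V E ends T A0 B0 ?ZA ?ZB"
    by (rule join.min_ext_sep_meet_join(2))
  then have "term_sep V T ?ZA ?ZB" "cost E ends ?ZA ?ZB \<le> cost E ends A1 B1"
    using min_ext_sep_cost_eq[OF _ min1] unfolding min_ext_sep_def by auto
  moreover have "extends A1 B1 ?ZA ?ZB"
    using ext_disj1 unfolding extends_def JA_def JB_def by blast
  ultimately have "?ZA = A1" "?ZB = B1"
    using maximal_sep_eq_if_cost_le[OF max1] by blast+
  then show ?thesis
    using ext_disj1 ext_disj2 unfolding JA_def JB_def by blast
qed

end

theorem lemma5p3: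
  fixes V :: "'a set" and E :: "'e set" and ends :: "'e \<Rightarrow> 'a set"
    and T :: "'a set set" and A0 B0 As Bt As' Bt' :: "'a set" and s t :: 'a and k :: nat
  defines "T' \<equiv> {p\<in>T. p \<inter> (A0 \<union> B0) = {}}"
  assumes inst: "ts_instance V E ends T A0 B0 k"
    and st: "{s, t} \<in> T'"
    and max1: "maximal_sep V E ends T As Bt"
    and min1: "min_ext_sep V E ends T (A0 \<union> {s}) (B0 \<union> {t}) As Bt"
    and max2: "maximal_sep V E ends T As' Bt'"
    and min2: "min_ext_sep V E ends T (A0 \<union> {s}) (B0 \<union> {t}) As' Bt'"
    and only1: "\<forall>p\<in>T'. p \<noteq> {s, t} \<longrightarrow> \<not> p \<subseteq> As \<union> Bt"
    and only2: "\<forall>p\<in>T'. p \<noteq> {s, t} \<longrightarrow> \<not> p \<subseteq> As' \<union> Bt'"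
  shows "dcut E ends As = dcut E ends As' \<and> dcut E ends Bt = dcut E ends Bt'
    \<and> min_ext_sep V E ends T (A0 \<union> {s}) (B0 \<union> {t}) (As \<inter> As') (Bt \<union> Bt')
    \<and> min_ext_sep V E ends T (A0 \<union> {s}) (B0 \<union> {t}) (As \<union> As') (Bt \<inter> Bt')
    \<and> As \<union> Bt = As' \<union> Bt'"
proof -
  have multigraph: "multigraph V E ends" and pairs: "pair_family V T"
    and sep0: "term_sep V T A0 B0"
    using inst unfolding ts_instance_def by auto
  have sep1: "term_sep V T As Bt" and sep2: "term_sep V T As' Bt'"
    using min1 min2 unfolding min_ext_sep_def by auto
  define W where "W = As \<union> Bt \<union> As' \<union> Bt'"
  have avoid: "p \<inter> W = {}" if "p \<in> T" "p \<inter> (A0 \<union> B0) = {}" "p \<noteq> {s, t}" for p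
  proof -
    have "\<not> p \<subseteq> As \<union> Bt" "\<not> p \<subseteq> As' \<union> Bt'"
      using that only1 only2 unfolding T'_def by simp_all
    then show ?thesis
      using term_sep_pair_subset_or_disjoint[OF pairs sep1 \<open>p \<in> T\<close>]
        term_sep_pair_subset_or_disjoint[OF pairs sep2 \<open>p \<in> T\<close>]
      unfolding W_def by auto
  qed
  have "W \<subseteq> V"
    using sep1 sep2 unfolding W_def term_sep_def by simp
  moreover have "{s, t} \<in> T" "{s, t} \<inter> (A0 \<union> B0) = {}"
    using st unfolding T'_def by auto
  ultimately have "unconstrained_within V T (A0 \<union> {s}) (B0 \<union> {t}) W"
    using avoid by (intro unconstrained_within_if_pairs_avoid[OF pairs sep0])
  then interpret two_min_ext_seps V E ends T "A0 \<union> {s}" "B0 \<union> {t}" W As Bt As' Bt'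
    using multigraph min1 min2 unfolding W_def by unfold_locales auto
  interpret swapped: two_min_ext_seps V E ends T "A0 \<union> {s}" "B0 \<union> {t}" W As' Bt' As Bt
    by (rule swap)
  have "As \<union> Bt = As' \<union> Bt'"
    by (rule subset_antisym[OF swapped.union_subset_if_maximal[OF max2] union_subset_if_maximal[OF max1]])
  with dcut_eq min_ext_sep_cross show ?thesis
    by (intro conjI)
qed

end
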